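(* Let $f$ be a loopless $(k,n)$-bounded affine permutation and let $\theta\in\Theta^{>0}_f$ be $f$-nondegenerate. Define $\gamma:\mathbb R\to\mathbb R^n$ by $\gamma_r(t)=\epsilon_r\prod_{p\in J_r}\sin(t-\theta_p)$, $r\in[n]$. Then for any $0\le s_1<s_2<\dots<s_k<\pi$, the vectors $\gamma(s_1),\dots,\gamma(s_k)$ form a basis of $\mathrm{Span}_{\mathbb R}\{\gamma(t):t\in\mathbb R\}$ (which is $k$-dimensional).
   Context: A $(k,n)$-bounded affine permutation is a bijection $f:\mathbb Z\to\mathbb Z$ with $f(j+n)=f(j)+n$, $j\le f(j)\le j+n$, $\sum_{j=1}^n(f(j)-j)=kn$; loopless if $f(p)>p$; $\bar f\in S_n$ given by $\bar f(p)\equiv f(p)$ mod $n$. For $r\in[n]$: $I_r=\{f(p)\bmod n: p\in\mathbb Z,\ p<r\le f(p)\}$, $J_r=I_r\setminus\{r\}$, $\epsilon_r=(-1)^{\#\{p\in[n]:\bar f(p)\le p<r\}}$. Strand diagram: $b_1,\dots,b_n$ clockwise on a circle, $p^-$ just before and $p^+$ just after $b_p$; straight arrows $S_p:s^+\to p^-$ with $s=\bar f^{-1}(p)$; distinct $p,q$ form an $f$-crossing if $S_p,S_q$ intersect; $G^\times_f$ is the graph on $[n]$ whose edges are the $f$-crossing pairs. $\theta\in\mathbb R^n$ is $f$-admissible if $\theta_p<\theta_q<\theta_p+\pi$ for all $f$-crossing pairs $p<q$. Fix representatives $p_1,\dots,p_c$, one in each connected component of $G^\times_f$; $\Theta^{>0}_f=\{\theta\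 f\text{-admissible}:\theta_{p_1}=\dots=\theta_{p_c}=0\}$. For distinct $p,q$ with $s=\bar f^{-1}(p)$, $t=\bar f^{-1}(q)$, $\{p,q\}\in\mathrm{Mis}^{\downarrow\uparrow}_f$ if $s^+,p^-,t^+,q^-$ are in counterclockwise order; $\theta$ is $f$-nondegenerate if $\theta_p\not\equiv\theta_q\pmod\pi$ for all $\{p,q\}\in\mathrm{Mis}^{\downarrow\uparrow}_f$. *)

theory Defs
  imports "HOL-Analysis.Analysis" "HOL-Library.Function_Algebras"
begin

definition bounded_affine_perm :: "nat \<Rightarrow> nat \<Rightarrow> (int \<Rightarrow> int) \<Rightarrow> bool" where
  "bounded_affine_perm k n f \<longleftrightarrow>
     bij f \<and> (\<forall>j. f (j + int n) = f j + int n) \<and> (\<forall>j. j \<le> f j \<and> f j \<le> j + int n) \<and>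
     (\<Sum>j\<in>{1..int n}. f j - j) = int k * int n"

definition loopless :: "(int \<Rightarrow> int) \<Rightarrow> bool" where
  "loopless f \<longleftrightarrow> (\<forall>p. f p > p)"

definition modn :: "nat \<Rightarrow> int \<Rightarrow> int" where
  "modn n x = (x - 1) mod int n + 1"

definition fbar :: "nat \<Rightarrow> (int \<Rightarrow> int) \<Rightarrow> int \<Rightarrow> int" where
  "fbar n f p = modn n (f p)"

definition fbar_inv :: "nat \<Rightarrow> (int \<Rightarrow> int) \<Rightarrow> int \<Rightarrow> int" where
  "fbar_inv n f p = (THE s. s \<in> {1..int n} \<and> fbar n f s = p)"

definition I_set :: "nat \<Rightarrow> (int \<Rightarrow> int) \<Rightarrow> int \<Rightarrow> int set" where
  "I_set n f r = {modn n (f p) | p. p < r \<and> r \<le> f p}"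

definition J_set :: "nat \<Rightarrow> (int \<Rightarrow> int) \<Rightarrow> int \<Rightarrow> int set" where
  "J_set n f r = I_set n f r - {r}"

definition eps_sign :: "nat \<Rightarrow> (int \<Rightarrow> int) \<Rightarrow> int \<Rightarrow> real" where
  "eps_sign n f r = (-1) ^ card {p \<in> {1..int n}. fbar n f p \<le> p \<and> p < r}"

text \<open>Clockwise positions on the circle: the points are, in clockwise order,
  1^-, b_1, 1^+, 2^-, b_2, 2^+, ..., n^-, b_n, n^+. We encode p^- by 3p-1,
  b_p by 3p and p^+ by 3p+1; cyclic (clockwise) order is increasing order up to rotation.\<close>
definition pos_minus :: "int \<Rightarrow> int" where "pos_minus p = 3 * p - 1"
definition pos_plus :: "int \<Rightarrow> int" where "pos_plus p = 3 * p + 1"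

text \<open>Two straight chords with pairwise distinct endpoints (a,b), (c,d) intersect iff the
  endpoints interleave on the circle.\<close>
definition strictly_between :: "int \<Rightarrow> int \<Rightarrow> int \<Rightarrow> bool" where
  "strictly_between a b x \<longleftrightarrow> min a b < x \<and> x < max a b"

definition chords_cross :: "int \<Rightarrow> int \<Rightarrow> int \<Rightarrow> int \<Rightarrow> bool" where
  "chords_cross a b c d \<longleftrightarrow> (strictly_between a b c \<noteq> strictly_between a b d)"

text \<open>The arrow S_p goes from s^+ to p^-, s = fbar^{-1}(p).\<close>
definition f_crossing :: "nat \<Rightarrow> (int \<Rightarrow> int) \<Rightarrow> int \<Rightarrow> int \<Rightarrow> bool" where
  "f_crossing n f p q \<longleftrightarrow> p \<in> {1..int n} \<and> q \<in> {1..int n} \<and> p \<noteq> q \<and>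
     chords_cross (pos_plus (fbar_inv n f p)) (pos_minus p)
                  (pos_plus (fbar_inv n f q)) (pos_minus q)"

definition crossing_connected :: "nat \<Rightarrow> (int \<Rightarrow> int) \<Rightarrow> int \<Rightarrow> int \<Rightarrow> bool" where
  "crossing_connected n f p q \<longleftrightarrow> (f_crossing n f)\<^sup>*\<^sup>* p q"

definition component_reps :: "nat \<Rightarrow> (int \<Rightarrow> int) \<Rightarrow> int set \<Rightarrow> bool" where
  "component_reps n f R \<longleftrightarrow> R \<subseteq> {1..int n} \<and>
     (\<forall>p\<in>{1..int n}. \<exists>!r. r \<in> R \<and> crossing_connected n f p r)"

definition f_admissible :: "nat \<Rightarrow> (int \<Rightarrow> int) \<Rightarrow> (int \<Rightarrow> real) \<Rightarrow> bool" where
  "f_admissible n f \<theta> \<longleftrightarrow>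
     (\<forall>p q. f_crossing n f p q \<and> p < q \<longrightarrow> \<theta> p < \<theta> q \<and> \<theta> q < \<theta> p + pi)"

definition Theta_pos :: "nat \<Rightarrow> (int \<Rightarrow> int) \<Rightarrow> int set \<Rightarrow> (int \<Rightarrow> real) set" where
  "Theta_pos n f R = {\<theta>. f_admissible n f \<theta> \<and> (\<forall>r\<in>R. \<theta> r = 0)}"

definition cw_order :: "int \<Rightarrow> int \<Rightarrow> int \<Rightarrow> int \<Rightarrow> bool" where
  "cw_order a b c d \<longleftrightarrow>
     (a < b \<and> b < c \<and> c < d) \<or> (b < c \<and> c < d \<and> d < a) \<or>
     (c < d \<and> d < a \<and> a < b) \<or> (d < a \<and> a < b \<and> b < c)"

definition ccw_order :: "int \<Rightarrow> int \<Rightarrow> int \<Rightarrow> int \<Rightarrow> bool" where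
  "ccw_order a b c d \<longleftrightarrow> cw_order d c b a"

definition Mis_du :: "nat \<Rightarrow> (int \<Rightarrow> int) \<Rightarrow> int \<Rightarrow> int \<Rightarrow> bool" where
  "Mis_du n f p q \<longleftrightarrow> p \<in> {1..int n} \<and> q \<in> {1..int n} \<and> p \<noteq> q \<and>
     ccw_order (pos_plus (fbar_inv n f p)) (pos_minus p)
               (pos_plus (fbar_inv n f q)) (pos_minus q)"

definition f_nondegenerate :: "nat \<Rightarrow> (int \<Rightarrow> int) \<Rightarrow> (int \<Rightarrow> real) \<Rightarrow> bool" where
  "f_nondegenerate n f \<theta> \<longleftrightarrow>
     (\<forall>p q. Mis_du n f p q \<longrightarrow> \<not> (\<exists>m::int. \<theta> p - \<theta> q = of_int m * pi))"

text \<open>Vectors of R^n are represented as functions int => real, supported on [n] = {1..n}.\<close>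
definition vscale :: "real \<Rightarrow> (int \<Rightarrow> real) \<Rightarrow> (int \<Rightarrow> real)" where
  "vscale c v = (\<lambda>i. c * v i)"

definition gamma :: "nat \<Rightarrow> (int \<Rightarrow> int) \<Rightarrow> (int \<Rightarrow> real) \<Rightarrow> real \<Rightarrow> (int \<Rightarrow> real)" where
  "gamma n f \<theta> t = (\<lambda>r. if r \<in> {1..int n}
       then eps_sign n f r * (\<Prod>p\<in>J_set n f r. sin (t - \<theta> p)) else 0)"

end

theory Submission
  imports Defs
begin

text \<open>Each coordinate \<open>\<gamma>\<^sub>r(t)\<close> is \<open>\<epsilon>\<^sub>r\<close> times a product of \<open>|J\<^sub>r| = k - 1\<close> shifted sines
  \<open>sin (t - \<theta>\<^sub>p)\<close>. Such products lie in the \<open>k\<close>-dimensional space spanned by the Lagrange-type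
  products \<open>h\<^sub>j(t) = \<Prod>\<^sub>i\<^sub>\<noteq>\<^sub>j sin (t - s\<^sub>i)\<close>, because \<open>sin (t - x)\<close> is a combination of
  \<open>sin (t - p)\<close> and \<open>sin (t - q)\<close> whenever \<open>sin (q - p) \<noteq> 0\<close>; interpolating at the nodes gives
  \<open>\<gamma>(t) = \<Sum>\<^sub>j h\<^sub>j(t) / h\<^sub>j(s\<^sub>j) \<cdot> \<gamma>(s\<^sub>j)\<close>.

  For independence, suppose \<open>\<Sum>\<^sub>i c\<^sub>i \<gamma>(s\<^sub>i) = 0\<close>, i.e. the functional \<open>\<Phi> g = \<Sum>\<^sub>i c\<^sub>i g(s\<^sub>i)\<close>
  kills every \<open>\<Prod>\<^sub>p\<^sub>\<in>\<^sub>J\<^sub>r sin (t - \<theta>\<^sub>p)\<close>. Intersect the \<open>J\<^sub>r\<close> over cyclic windows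
  \<open>r = j, \<dots>, j + m - 1\<close>. Two consecutive windows of length \<open>m\<close> are either nested or differ in
  one element each, \<open>u\<close> and \<open>v\<close>, whose arrows cross or are misaligned, so \<open>sin (\<theta>\<^sub>v - \<theta>\<^sub>u) \<noteq> 0\<close>.
  Hence \<open>\<Phi>\<close> also kills every product of \<open>k - 1\<close> sines containing the factors of a window
  of length \<open>m + 1\<close>. The window of length \<open>n\<close> is empty, so \<open>\<Phi>\<close> kills all such products, in
  particular \<open>h\<^sub>j\<close>, which gives \<open>c\<^sub>j h\<^sub>j(s\<^sub>j) = 0\<close>.\<close>

section \<open>Products of shifted sines\<close>

definition sin_prod :: "real list \<Rightarrow> real \<Rightarrow> real" where
  "sin_prod xs t = (\<Prod>x\<leftarrow>xs. sin (t - x))"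

lemma sin_diff_three_term:
  fixes p q c t :: real
  shows "sin (q - p) * sin (t - c) = sin (q - c) * sin (t - p) + sin (c - p) * sin (t - q)"
  unfolding sin_diff cos_diff by algebra

lemma sin_shift_combination:
  fixes p q c :: real
  assumes "sin (q - p) \<noteq> 0"
  shows "\<exists>\<alpha> \<beta>. \<forall>t. sin (t - c) = \<alpha> * sin (t - p) + \<beta> * sin (t - q)"
proof (intro exI allI)
  fix t
  show "sin (t - c) = sin (q - c) / sin (q - p) * sin (t - p) + sin (c - p) / sin (q - p) * sin (t - q)"
    using sin_diff_three_term[of q p t c] assms by (simp add: field_simps)
qed

definition sin_lagrange :: "(nat \<Rightarrow> real) \<Rightarrow> nat \<Rightarrow> nat \<Rightarrow> real \<Rightarrow> real" where
  "sin_lagrange s m j t = (\<Prod>i\<in>{1..m} - {j}. sin (t - s i))"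

definition distinct_sin_nodes :: "(nat \<Rightarrow> real) \<Rightarrow> nat \<Rightarrow> bool" where
  "distinct_sin_nodes s m \<longleftrightarrow> (\<forall>i\<in>{1..m}. \<forall>j\<in>{1..m}. i \<noteq> j \<longrightarrow> sin (s i - s j) \<noteq> 0)"

lemma sin_lagrange_node_zero: "i \<in> {1..m} \<Longrightarrow> i \<noteq> j \<Longrightarrow> sin_lagrange s m j (s i) = 0"
  unfolding sin_lagrange_def by (intro prod_zero) (auto intro!: bexI[of _ i])

lemma sin_lagrange_node_nonzero:
  "distinct_sin_nodes s m \<Longrightarrow> j \<in> {1..m} \<Longrightarrow> sin_lagrange s m j (s j) \<noteq> 0"
  unfolding sin_lagrange_def distinct_sin_nodes_def by (subst prod_zero_iff) auto

lemma sin_lagrange_eq_sin_prod: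
  assumes "j \<in> {1..m}"
  shows "\<exists>xs. length xs + 1 = m \<and> sin_lagrange s m j = sin_prod xs"
proof (intro exI conjI)
  let ?xs = "map s (sorted_list_of_set ({1..m} - {j}))"
  show "length ?xs + 1 = m" using assms by auto
  show "sin_lagrange s m j = sin_prod ?xs"
    unfolding sin_prod_def sin_lagrange_def fun_eq_iff
    by (simp add: prod.distinct_set_conv_list[symmetric] comp_def)
qed

lemma sin_mul_sin_lagrange:
  assumes "j \<in> {1..m}" and "sin (s (Suc m) - s j) \<noteq> 0"
  shows "\<exists>\<alpha> \<beta>. \<forall>t. sin (t - x) * sin_lagrange s m j t
                   = \<alpha> * sin_lagrange s (Suc m) (Suc m) t + \<beta> * sin_lagrange s (Suc m) j t"
proof -
  obtain \<alpha> \<beta> where ab: "\<And>t. sin (t - x) = \<alpha> * sin (t - s j) + \<beta> * sin (t - s (Suc m))"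
    using sin_shift_combination[OF assms(2)] by blast
  have "{1..Suc m} - {Suc m} = {1..m}" "{1..Suc m} - {j} = insert (Suc m) ({1..m} - {j})"
    using assms(1) by auto
  then have "sin (t - s j) * sin_lagrange s m j t = sin_lagrange s (Suc m) (Suc m) t"
       and "sin (t - s (Suc m)) * sin_lagrange s m j t = sin_lagrange s (Suc m) j t" for t
    unfolding sin_lagrange_def using assms(1) by (simp_all add: prod.remove)
  then show ?thesis
    by (intro exI[of _ \<alpha>] exI[of _ \<beta>]) (simp add: ab algebra_simps)
qed

lemma sin_prod_in_lagrange_span:
  assumes "distinct_sin_nodes s m" and "length xs + 1 = m"
  shows "\<exists>d. sin_prod xs = (\<lambda>t. \<Sum>j\<in>{1..m}. d j * sin_lagrange s m j t)"
  using assms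
proof (induction xs arbitrary: m)
  case Nil
  then show ?case by (intro exI[of _ "\<lambda>_. 1"]) (auto simp: sin_prod_def sin_lagrange_def)
next
  case (Cons x xs)
  define m' where "m' = m - 1"
  have m: "m = Suc m'" "length xs + 1 = m'" using Cons.prems m'_def by auto
  have nodes': "distinct_sin_nodes s m'"
    using Cons.prems(1) m unfolding distinct_sin_nodes_def by auto
  obtain d' where d': "sin_prod xs = (\<lambda>t. \<Sum>j\<in>{1..m'}. d' j * sin_lagrange s m' j t)"
    using Cons.IH[OF nodes' m(2)] by blast
  have "\<forall>j\<in>{1..m'}. \<exists>\<alpha> \<beta>. \<forall>t. sin (t - x) * sin_lagrange s m' j t
                   = \<alpha> * sin_lagrange s m m t + \<beta> * sin_lagrange s m j t"
    using Cons.prems(1) m sin_mul_sin_lagrange unfolding distinct_sin_nodes_def by simp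
  then obtain \<alpha> \<beta> where ab: "\<And>j t. j \<in> {1..m'} \<Longrightarrow> sin (t - x) * sin_lagrange s m' j t
                   = \<alpha> j * sin_lagrange s m m t + \<beta> j * sin_lagrange s m j t"
    by metis
  define d where "d j = (if j = m then \<Sum>i\<in>{1..m'}. d' i * \<alpha> i else d' j * \<beta> j)" for j
  have "sin_prod (x # xs) t = (\<Sum>j\<in>{1..m}. d j * sin_lagrange s m j t)" for t
  proof -
    have "sin_prod (x # xs) t = sin (t - x) * sin_prod xs t" by (simp add: sin_prod_def)
    also have "\<dots> = (\<Sum>j\<in>{1..m'}. d' j * (sin (t - x) * sin_lagrange s m' j t))"
      unfolding d' by (simp add: sum_distrib_left algebra_simps)
    also have "\<dots> = (\<Sum>j\<in>{1..m'}. d' j * \<alpha> j * sin_lagrange s m m t + d' j * \<beta> j * sin_lagrange s m j t)"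
      by (intro sum.cong) (simp_all add: ab algebra_simps)
    also have "\<dots> = d m * sin_lagrange s m m t + (\<Sum>j\<in>{1..m'}. d j * sin_lagrange s m j t)"
      unfolding d_def using m by (auto simp: sum.distrib sum_distrib_right)
    also have "\<dots> = (\<Sum>j\<in>{1..m}. d j * sin_lagrange s m j t)"
      using m by (simp add: atLeastAtMostSuc_conv)
    finally show ?thesis .
  qed
  then show ?case by blast
qed

lemma sin_prod_lagrange_expansion:
  assumes "distinct_sin_nodes s m" and "length xs + 1 = m"
  shows "sin_prod xs t = (\<Sum>j\<in>{1..m}. sin_prod xs (s j) / sin_lagrange s m j (s j) * sin_lagrange s m j t)"
proof -
  obtain d where d: "sin_prod xs = (\<lambda>t. \<Sum>j\<in>{1..m}. d j * sin_lagrange s m j t)"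
    using sin_prod_in_lagrange_span[OF assms] by blast
  have "d j = sin_prod xs (s j) / sin_lagrange s m j (s j)" if "j \<in> {1..m}" for j
  proof -
    have "sin_prod xs (s j) = d j * sin_lagrange s m j (s j)"
      using that unfolding d by (subst sum.remove) (auto intro!: sum.neutral simp: sin_lagrange_node_zero)
    then show ?thesis using sin_lagrange_node_nonzero[OF assms(1) that] by simp
  qed
  then show ?thesis unfolding d by (intro sum.cong) simp_all
qed

lemma increasing_chain_less:
  fixes s :: "nat \<Rightarrow> 'a::order"
  assumes "\<forall>i\<in>{1..<k}. s i < s (Suc i)" and "1 \<le> i" "i < j" "j \<le> k"
  shows "s i < s j"
proof -
  have "s i < s (Suc i + d)" if "Suc i + d \<le> k" for d
    using that
  proof (induction d)
    case 0 then show ?case using assms(1,2) by simp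
  next
    case (Suc d)
    then have "s i < s (Suc i + d)" by simp
    also have "\<dots> < s (Suc i + Suc d)" using assms(1,2) Suc.prems by simp
    finally show ?case .
  qed
  moreover have "j = Suc i + (j - Suc i)" using assms(3) by simp
  ultimately show ?thesis using assms(4) by metis
qed

lemma distinct_sin_nodes_if_increasing:
  assumes "0 \<le> s 1" and "\<forall>i\<in>{1..<k}. s i < s (Suc i)" and "s k < pi"
  shows "distinct_sin_nodes s k"
proof -
  have le: "s i \<le> s j" if "1 \<le> i" "i \<le> j" "j \<le> k" for i j
    using increasing_chain_less[OF assms(2), of i j] that by (cases "i = j") auto
  have pos: "sin (s j - s i) > 0" if "1 \<le> i" "i < j" "j \<le> k" for i j
    using increasing_chain_less[OF assms(2) that] le[of 1 i] le[of j k] that assms(1,3)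
    by (intro sin_gt_zero) auto
  show ?thesis
    unfolding distinct_sin_nodes_def
    by (metis atLeastAtMost_iff linorder_neqE_nat minus_diff_eq sin_minus neg_0_less_iff_less
        order_less_irrefl pos)
qed

definition sin_prod_set :: "(int \<Rightarrow> real) \<Rightarrow> int set \<Rightarrow> real \<Rightarrow> real" where
  "sin_prod_set \<theta> A t = (\<Prod>p\<in>A. sin (t - \<theta> p))"

lemma sin_prod_set_eq_sin_prod:
  assumes "finite A"
  shows "sin_prod_set \<theta> A = sin_prod (map \<theta> (sorted_list_of_set A))"
  unfolding sin_prod_set_def sin_prod_def fun_eq_iff
  using assms by (simp add: prod.distinct_set_conv_list[symmetric] comp_def)

lemma sin_prod_set_lagrange_expansion:
  assumes "distinct_sin_nodes s m" and "finite A" and "card A + 1 = m"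
  shows "sin_prod_set \<theta> A t =
    (\<Sum>j\<in>{1..m}. sin_prod_set \<theta> A (s j) / sin_lagrange s m j (s j) * sin_lagrange s m j t)"
  using sin_prod_lagrange_expansion[OF assms(1)] assms(2,3)
  unfolding sin_prod_set_eq_sin_prod[OF assms(2)] by simp

definition annihilates_multiples :: "nat \<Rightarrow> (int \<Rightarrow> real) \<Rightarrow> (nat \<Rightarrow> real) \<Rightarrow> (nat \<Rightarrow> real) \<Rightarrow> int set \<Rightarrow> bool" where
  "annihilates_multiples k \<theta> s c A \<longleftrightarrow> (\<forall>xs. length xs + card A + 1 = k \<longrightarrow>
      (\<Sum>i\<in>{1..k}. c i * (sin_prod_set \<theta> A (s i) * sin_prod xs (s i))) = 0)"

lemma annihilates_multiples_of_pair:
  assumes "finite C" and "u \<notin> C" "v \<notin> C" and "sin (\<theta> v - \<theta> u) \<noteq> 0" and "card C + 2 \<le> k"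
    and "annihilates_multiples k \<theta> s c (insert u C)" "annihilates_multiples k \<theta> s c (insert v C)"
  shows "annihilates_multiples k \<theta> s c C"
  unfolding annihilates_multiples_def
proof (intro allI impI)
  fix xs :: "real list"
  assume len: "length xs + card C + 1 = k"
  then obtain x xs' where xs: "xs = x # xs'" using assms(5) by (cases xs) auto
  obtain \<alpha> \<beta> where ab: "\<And>t. sin (t - x) = \<alpha> * sin (t - \<theta> u) + \<beta> * sin (t - \<theta> v)"
    using sin_shift_combination[OF assms(4)] by blast
  have len': "length xs' + card (insert u C) + 1 = k" "length xs' + card (insert v C) + 1 = k"
    using len xs assms(1-3) by auto
  have "(\<Sum>i\<in>{1..k}. c i * (sin_prod_set \<theta> C (s i) * sin_prod xs (s i))) =
        \<alpha> * (\<Sum>i\<in>{1..k}. c i * (sin_prod_set \<theta> (insert u C) (s i) * sin_prod xs' (s i))) +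
        \<beta> * (\<Sum>i\<in>{1..k}. c i * (sin_prod_set \<theta> (insert v C) (s i) * sin_prod xs' (s i)))"
    unfolding sum_distrib_left sum.distrib[symmetric]
    using assms(1-3) by (intro sum.cong) (simp_all add: xs ab sin_prod_def sin_prod_set_def algebra_simps)
  also have "\<dots> = 0"
    using assms(6,7) len' unfolding annihilates_multiples_def by simp
  finally show "(\<Sum>i\<in>{1..k}. c i * (sin_prod_set \<theta> C (s i) * sin_prod xs (s i))) = 0" .
qed

lemma coeffs_zero_if_annihilates_multiples_empty:
  assumes "distinct_sin_nodes s k" and "annihilates_multiples k \<theta> s c {}" and "j \<in> {1..k}"
  shows "c j = 0"
proof -
  obtain xs where xs: "length xs + 1 = k" "sin_lagrange s k j = sin_prod xs"
    using sin_lagrange_eq_sin_prod[OF assms(3)] by blast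
  have "(\<Sum>i\<in>{1..k}. c i * sin_lagrange s k j (s i)) = 0"
    using assms(2) xs unfolding annihilates_multiples_def sin_prod_set_def by simp
  moreover have "(\<Sum>i\<in>{1..k}. c i * sin_lagrange s k j (s i)) = c j * sin_lagrange s k j (s j)"
    using assms(3) by (subst sum.remove) (auto intro!: sum.neutral simp: sin_lagrange_node_zero)
  ultimately show ?thesis
    using sin_lagrange_node_nonzero[OF assms(1,3)] by simp
qed

section \<open>Residues modulo \<open>n\<close>, cyclic intervals and arrows\<close>

lemma modn_in_range:
  assumes "0 < n"
  shows "modn n x \<in> {1..int n}"
proof -
  have "0 \<le> (x - 1) mod int n" "(x - 1) mod int n < int n" using assms by simp_all
  then show ?thesis unfolding modn_def by simp
qed

lemma modn_eq_self: "x \<in> {1..int n} \<Longrightarrow> modn n x = x"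
  unfolding modn_def by (auto simp: mod_pos_pos_trivial)

lemma modn_decomp: "x = modn n x + (x - 1) div int n * int n"
  unfolding modn_def using div_mult_mod_eq[of "x - 1" "int n"] by linarith

lemma modn_add_mult: "modn n (x + l * int n) = modn n x"
proof -
  have "x + l * int n - 1 = (x - 1) + l * int n" by simp
  then show ?thesis unfolding modn_def by (simp only: mod_mult_self1)
qed

lemma modn_of_le_double:
  assumes "1 \<le> x" "x \<le> 2 * int n"
  shows "modn n x = (if x \<le> int n then x else x - int n)"
  using modn_eq_self modn_add_mult[where x = "x - int n" and l = 1 and n = n] assms by auto

lemma modn_add_1:
  assumes "0 < n"
  shows "modn n (x + 1) = (if modn n x < int n then modn n x + 1 else 1)"
proof -
  have "modn n (x + 1) = modn n (modn n x + 1)"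
    using modn_add_mult[where x = "modn n x + 1" and l = "(x - 1) div int n" and n = n]
      modn_decomp[of x n]
    by (simp add: algebra_simps)
  also have "\<dots> = (if modn n x < int n then modn n x + 1 else 1)"
  proof -
    have "modn n (int n + 1) = 1"
      using modn_add_mult[where x = 1 and l = 1 and n = n] modn_eq_self[of 1 n] assms
      by (simp add: add.commute)
    then show ?thesis
      using modn_in_range[OF assms, of x] modn_eq_self[of "modn n x + 1" n] by auto
  qed
  finally show ?thesis .
qed

definition cyclic_Ioo :: "int \<Rightarrow> int \<Rightarrow> int \<Rightarrow> bool" where
  "cyclic_Ioo a b r \<longleftrightarrow> (if a < b then a < r \<and> r < b else a < r \<or> r < b)"

lemma cyclic_Ioo_start: "\<not> cyclic_Ioo a b a"
  unfolding cyclic_Ioo_def by auto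

lemma cyclic_Ioo_succ: "cyclic_Ioo a b (r + 1) \<longleftrightarrow> (a = r \<or> cyclic_Ioo a b r) \<and> b \<noteq> r + 1"
  unfolding cyclic_Ioo_def by auto

lemma cyclic_Ioo_exit:
  assumes "a \<in> {1..n}" "b \<in> {1..n}" "r \<in> {1..n}"
    and "cyclic_Ioo a b r" "\<not> cyclic_Ioo a b (if r < n then r + 1 else 1)"
  shows "b = (if r < n then r + 1 else 1)"
  using assms unfolding cyclic_Ioo_def by (auto split: if_splits)

lemma cyclic_Ioo_enter:
  assumes "a \<in> {1..n}" "b \<in> {1..n}" "r \<in> {1..n}"
    and "\<not> cyclic_Ioo a b r" "cyclic_Ioo a b (if r < n then r + 1 else 1)"
  shows "a = r"
  using assms unfolding cyclic_Ioo_def by (auto split: if_splits)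

lemma cyclic_Ioo_pred: "a \<noteq> r \<Longrightarrow> cyclic_Ioo a (r + 1) r"
  unfolding cyclic_Ioo_def by auto

definition arrows_separated :: "int \<Rightarrow> int \<Rightarrow> int \<Rightarrow> int \<Rightarrow> bool" where
  "arrows_separated a u b v \<longleftrightarrow>
     chords_cross (pos_plus a) (pos_minus u) (pos_plus b) (pos_minus v) \<or>
     ccw_order (pos_plus a) (pos_minus u) (pos_plus b) (pos_minus v) \<or>
     ccw_order (pos_plus b) (pos_minus v) (pos_plus a) (pos_minus u)"

lemma pos_plus_minus_less:
  "pos_plus a < pos_minus b \<longleftrightarrow> a < b" "pos_minus a < pos_plus b \<longleftrightarrow> a \<le> b"
  "pos_plus a < pos_plus b \<longleftrightarrow> a < b" "pos_minus a < pos_minus b \<longleftrightarrow> a < b"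
  unfolding pos_plus_def pos_minus_def by auto

lemma strictly_between_iff: "strictly_between x y z \<longleftrightarrow> x < z \<and> z < y \<or> y < z \<and> z < x"
  unfolding strictly_between_def by auto

lemma arrows_separated_if_arcs:
  assumes "a \<in> {1..n}" "u \<in> {1..n}" "b \<in> {1..n}" "v \<in> {1..n}" "u \<noteq> v" "a \<noteq> b"
    and "cyclic_Ioo a u b" "cyclic_Ioo b v (if b < n then b + 1 else 1)" "cyclic_Ioo b v u"
  shows "arrows_separated a u b v"
  using assms
  unfolding arrows_separated_def cyclic_Ioo_def chords_cross_def strictly_between_iff
    ccw_order_def cw_order_def pos_plus_minus_less
  by (smt (z3))

lemma chords_cross_swap:
  assumes "a \<noteq> b" "u \<noteq> v"
    and "chords_cross (pos_plus a) (pos_minus u) (pos_plus b) (pos_minus v)"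
  shows "chords_cross (pos_plus b) (pos_minus v) (pos_plus a) (pos_minus u)"
  using assms unfolding chords_cross_def strictly_between_iff pos_plus_def pos_minus_def by smt

context module
begin

lemma inj_on_independent_image:
  assumes "finite I" and coeffs_zero: "\<And>c. (\<Sum>i\<in>I. scale (c i) (g i)) = 0 \<Longrightarrow> \<forall>i\<in>I. c i = 0"
  shows "inj_on g I \<and> independent (g ` I)"
proof
  show inj: "inj_on g I"
  proof (rule inj_onI, rule ccontr)
    fix i j assume ij: "i \<in> I" "j \<in> I" "g i = g j" "i \<noteq> j"
    define c :: "_ \<Rightarrow> 'a" where "c l = (if l = i then 1 else if l = j then -1 else 0)" for l
    have "(\<Sum>l\<in>I. scale (c l) (g l)) = (\<Sum>l\<in>{i, j}. scale (c l) (g l))"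
      by (rule sum.mono_neutral_right[OF assms(1)]) (use ij in \<open>auto simp: c_def\<close>)
    also have "\<dots> = 0" using ij by (simp add: c_def)
    finally have "c i = 0" using coeffs_zero[of c] ij(1) by blast
    then show False by (simp add: c_def)
  qed
  show "independent (g ` I)"
  proof
    assume "dependent (g ` I)"
    then obtain u where u: "\<exists>v\<in>g ` I. u v \<noteq> 0" "(\<Sum>v\<in>g ` I. scale (u v) v) = 0"
      using dependent_finite[OF finite_imageI[OF assms(1)]] by blast
    then have "\<forall>i\<in>I. u (g i) = 0"
      using coeffs_zero[of "\<lambda>i. u (g i)"] sum.reindex[OF inj, of "\<lambda>v. scale (u v) v"] by simp
    then show False using u(1) by blast
  qed
qed

end

interpretation V: vector_space vscale
  by unfold_locales (auto simp: vscale_def fun_eq_iff algebra_simps)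

lemma sum_fun_apply: "finite A \<Longrightarrow> (\<Sum>x\<in>A. F x) r = (\<Sum>x\<in>A. F x r)"
  by (induction A rule: finite_induct) auto

lemma sum_vscale_apply: "(\<Sum>i\<in>{1..k}. vscale (c i) (F i)) r = (\<Sum>i\<in>{1..k::nat}. c i * F i r)"
  by (simp add: sum_fun_apply vscale_def)

section \<open>The sets \<open>J\<^sub>r\<close> of a loopless bounded affine permutation\<close>

locale loopless_affine_perm =
  fixes k n :: nat and f :: "int \<Rightarrow> int"
  assumes n_ge_1: "1 \<le> n" and bounded: "bounded_affine_perm k n f" and loopless: "loopless f"
begin

lemma n_pos: "0 < n"
  using n_ge_1 by simp

lemma f_bounds: "j < f j" "f j \<le> j + int n"
  using bounded loopless unfolding bounded_affine_perm_def loopless_def by auto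

lemma inj_f: "inj f"
  using bounded unfolding bounded_affine_perm_def by (simp add: bij_is_inj)

lemma f_add_n: "f (j + int n) = f j + int n"
  using bounded unfolding bounded_affine_perm_def by blast

lemma f_add_mult: "f (j + l * int n) = f j + l * int n"
proof (induction l rule: int_induct[where k = 0])
  case (step1 i)
  have "f (j + (i + 1) * int n) = f ((j + i * int n) + int n)" by (simp add: algebra_simps)
  also have "\<dots> = f (j + i * int n) + int n" by (rule f_add_n)
  finally show ?case using step1 by (simp add: algebra_simps)
next
  case (step2 i)
  have "f (j + i * int n) = f ((j + (i - 1) * int n) + int n)" by (simp add: algebra_simps)
  also have "\<dots> = f (j + (i - 1) * int n) + int n" by (rule f_add_n)
  finally show ?case using step2 by (simp add: algebra_simps)
qed simp

lemma fbar_in_range: "fbar n f x \<in> {1..int n}"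
  unfolding fbar_def using modn_in_range[OF n_pos] .

lemma fbar_inj: "inj_on (fbar n f) {1..int n}"
proof (rule inj_onI)
  fix x y assume x: "x \<in> {1..int n}" and y: "y \<in> {1..int n}" and eq: "fbar n f x = fbar n f y"
  define l where "l = (f x - 1) div int n - (f y - 1) div int n"
  have "f x = f y + l * int n"
    using modn_decomp[of "f x" n] modn_decomp[of "f y" n] eq unfolding fbar_def l_def
    by (simp add: algebra_simps)
  then have "f x = f (y + l * int n)" by (simp add: f_add_mult)
  then have "x = y + l * int n" by (rule injD[OF inj_f])
  moreover have "l = 0"
  proof (rule ccontr)
    assume "l \<noteq> 0"
    then have "1 \<le> \<bar>l\<bar>" by arith
    then have "int n \<le> \<bar>l\<bar> * int n" using mult_right_mono[of 1 "\<bar>l\<bar>" "int n"] by simp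
    moreover have "\<bar>x - y\<bar> < int n" using x y by auto
    ultimately show False using \<open>x = y + l * int n\<close> by (simp add: abs_mult)
  qed
  ultimately show "x = y" by simp
qed

lemma bij_betw_fbar: "bij_betw (fbar n f) {1..int n} {1..int n}"
proof -
  have "fbar n f ` {1..int n} \<subseteq> {1..int n}" using fbar_in_range by blast
  then have "fbar n f ` {1..int n} = {1..int n}"
    using endo_inj_surj[OF finite_atLeastAtMost_int _ fbar_inj] by simp
  then show ?thesis unfolding bij_betw_def using fbar_inj by simp
qed

lemma fbar_inv_spec:
  assumes "u \<in> {1..int n}"
  shows "fbar_inv n f u \<in> {1..int n} \<and> fbar n f (fbar_inv n f u) = u"
proof -
  obtain a where a: "a \<in> {1..int n}" "fbar n f a = u"
    using assms bij_betw_imp_surj_on[OF bij_betw_fbar] by (metis imageE)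
  have "\<exists>!a. a \<in> {1..int n} \<and> fbar n f a = u"
  proof (rule ex1I)
    show "a \<in> {1..int n} \<and> fbar n f a = u" using a by simp
  next
    fix b assume "b \<in> {1..int n} \<and> fbar n f b = u"
    then show "b = a" using a inj_onD[OF fbar_inj] by metis
  qed
  then show ?thesis unfolding fbar_inv_def by (rule theI')
qed

lemma fbar_inv_in_range: "u \<in> {1..int n} \<Longrightarrow> fbar_inv n f u \<in> {1..int n}"
  and fbar_fbar_inv: "u \<in> {1..int n} \<Longrightarrow> fbar n f (fbar_inv n f u) = u"
  using fbar_inv_spec by simp_all

lemma fbar_inv_fbar:
  assumes "a \<in> {1..int n}"
  shows "fbar_inv n f (fbar n f a) = a"
proof -
  have "fbar_inv n f (fbar n f a) \<in> {1..int n}" "fbar n f (fbar_inv n f (fbar n f a)) = fbar n f a"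
    using fbar_inv_spec[OF fbar_in_range] by simp_all
  then show ?thesis using inj_onD[OF fbar_inj _ _ assms] by simp
qed

lemma fbar_inv_eq_iff:
  "u \<in> {1..int n} \<Longrightarrow> a \<in> {1..int n} \<Longrightarrow> fbar_inv n f u = a \<longleftrightarrow> u = fbar n f a"
  using fbar_fbar_inv fbar_inv_fbar by metis

lemma fbar_eq: "a \<in> {1..int n} \<Longrightarrow> fbar n f a = (if f a \<le> int n then f a else f a - int n)"
  unfolding fbar_def using f_bounds[of a] by (intro modn_of_le_double) auto

lemma modn_f_eq_iff:
  assumes "u \<in> {1..int n}"
  shows "modn n (f p) = u \<longleftrightarrow> (\<exists>l. p = fbar_inv n f u + l * int n)"
proof
  assume fp: "modn n (f p) = u"
  define l where "l = (p - 1) div int n"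
  have p: "modn n p + l * int n = p" using modn_decomp[of p n] unfolding l_def by simp
  have "fbar n f (modn n p) = modn n (f (modn n p) + l * int n)"
    unfolding fbar_def modn_add_mult ..
  also have "\<dots> = u" using fp f_add_mult[of "modn n p" l] unfolding p by simp
  finally have "modn n p = fbar_inv n f u"
    using fbar_inv_fbar[OF modn_in_range[OF n_pos]] by metis
  then show "\<exists>l. p = fbar_inv n f u + l * int n" using p by metis
next
  assume "\<exists>l. p = fbar_inv n f u + l * int n"
  then obtain l where "p = fbar_inv n f u + l * int n" by blast
  then show "modn n (f p) = u"
    using fbar_fbar_inv[OF assms] unfolding fbar_def by (simp add: f_add_mult modn_add_mult)
qed

lemma mem_I_set_iff:
  assumes u: "u \<in> {1..int n}" and r: "r \<in> {1..int n}"
  defines "a \<equiv> fbar_inv n f u"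
  shows "u \<in> I_set n f r \<longleftrightarrow> a < r \<and> r \<le> f a \<or> r \<le> f a - int n"
proof -
  have a: "a \<in> {1..int n}" "a < f a" "f a \<le> a + int n"
    using fbar_inv_in_range[OF u] f_bounds unfolding a_def by auto
  have "u \<in> I_set n f r \<longleftrightarrow> (\<exists>p. modn n (f p) = u \<and> p < r \<and> r \<le> f p)"
    unfolding I_set_def by auto
  also have "\<dots> \<longleftrightarrow> (\<exists>l. a + l * int n < r \<and> r \<le> f a + l * int n)"
    unfolding modn_f_eq_iff[OF u] a_def by (auto simp: f_add_mult)
  also have "\<dots> \<longleftrightarrow> a < r \<and> r \<le> f a \<or> r \<le> f a - int n"
  proof
    assume "\<exists>l. a + l * int n < r \<and> r \<le> f a + l * int n"
    then obtain l where l: "a + l * int n < r" "r \<le> f a + l * int n" by blast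
    have "l < 1"
    proof (rule ccontr)
      assume "\<not> l < 1"
      then have "1 * int n \<le> l * int n" by (intro mult_right_mono) auto
      then show False using l(1) a(1) r by auto
    qed
    moreover have "-2 < l"
    proof (rule ccontr)
      assume "\<not> -2 < l"
      then have "l * int n \<le> -2 * int n" by (intro mult_right_mono) auto
      then show False using l(2) a r by auto
    qed
    ultimately have "l = 0 \<or> l = -1" by auto
    then show "a < r \<and> r \<le> f a \<or> r \<le> f a - int n" using l by auto
  next
    assume "a < r \<and> r \<le> f a \<or> r \<le> f a - int n"
    then show "\<exists>l. a + l * int n < r \<and> r \<le> f a + l * int n"
      using a(1) r by (auto intro: exI[of _ 0] exI[of _ "-1"])
  qed
  finally show ?thesis .
qed

lemma I_set_subset: "I_set n f r \<subseteq> {1..int n}"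
  unfolding I_set_def using modn_in_range[OF n_pos] by auto

lemma J_set_subset: "J_set n f r \<subseteq> {1..int n}"
  using I_set_subset unfolding J_set_def by auto

lemma finite_J_set: "finite (J_set n f r)"
  using J_set_subset by (rule finite_subset) simp

text \<open>The arrow \<open>S\<^sub>u\<close> runs from \<open>a\<^sup>+\<close> to \<open>u\<^sup>-\<close> with \<open>a = fbar_inv n f u\<close>, so \<open>u \<in> J\<^sub>r\<close>
  says that \<open>b\<^sub>r\<close> lies strictly between the endpoints of \<open>S\<^sub>u\<close>.\<close>
lemma mem_J_set_iff:
  assumes r: "r \<in> {1..int n}"
  shows "u \<in> J_set n f r \<longleftrightarrow> u \<in> {1..int n} \<and> cyclic_Ioo (fbar_inv n f u) u r"
proof (cases "u \<in> {1..int n}")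
  case u: True
  define a where "a = fbar_inv n f u"
  have a: "a \<in> {1..int n}" "a < f a" "f a \<le> a + int n"
    using fbar_inv_in_range[OF u] f_bounds unfolding a_def by auto
  have "u = (if f a \<le> int n then f a else f a - int n)"
    using fbar_eq[OF a(1)] fbar_fbar_inv[OF u] unfolding a_def by simp
  then show ?thesis
    using mem_I_set_iff[OF u r] a r u unfolding J_set_def a_def[symmetric] cyclic_Ioo_def
    by (auto split: if_splits)
qed (use J_set_subset in blast)

lemma fbar_le_iff: "a \<in> {1..int n} \<Longrightarrow> fbar n f a \<le> a \<longleftrightarrow> int n < f a"
  using fbar_eq f_bounds[of a] by auto

lemma card_f_gt_n: "card {a \<in> {1..int n}. int n < f a} = k"
proof -
  let ?W = "{a \<in> {1..int n}. int n < f a}"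
  have "f a - a = (fbar n f a - a) + (if int n < f a then int n else 0)" if "a \<in> {1..int n}" for a
    using fbar_eq[OF that] by auto
  then have "(\<Sum>j\<in>{1..int n}. f j - j) =
      (\<Sum>a\<in>{1..int n}. (fbar n f a - a) + (if int n < f a then int n else 0))"
    by (intro sum.cong) simp_all
  also have "\<dots> = (\<Sum>a\<in>{1..int n}. fbar n f a - a) + (\<Sum>a\<in>{1..int n}. if int n < f a then int n else 0)"
    by (rule sum.distrib)
  also have "(\<Sum>a\<in>{1..int n}. fbar n f a - a) = 0"
    using sum.reindex_bij_betw[OF bij_betw_fbar, of "\<lambda>x. x"] by (simp add: sum_subtractf)
  also have "(\<Sum>a\<in>{1..int n}. if int n < f a then int n else 0) = int n * int (card ?W)"
    by (simp add: sum.If_cases Int_def)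
  finally have "int k * int n = int n * int (card ?W)"
    using bounded unfolding bounded_affine_perm_def by simp
  then show ?thesis using n_pos by simp
qed

lemma card_J_set_1: "card (J_set n f 1) + 1 = k"
proof -
  let ?U = "{u \<in> {1..int n}. u \<le> fbar_inv n f u}"
  have one: "(1::int) \<in> {1..int n}" using n_pos by simp
  have "J_set n f 1 = ?U - {1}"
  proof (rule set_eqI)
    fix u
    show "u \<in> J_set n f 1 \<longleftrightarrow> u \<in> ?U - {1}"
      unfolding mem_J_set_iff[OF one] cyclic_Ioo_def using fbar_inv_in_range[of u] by auto
  qed
  moreover have "1 \<in> ?U" using fbar_inv_in_range[OF one] one by simp
  moreover have "finite ?U" by (rule finite_subset[of _ "{1..int n}"]) auto
  ultimately have "card (J_set n f 1) + 1 = card ?U"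
    using card_Suc_Diff1[of ?U 1] by simp
  also have "?U = fbar n f ` {a \<in> {1..int n}. int n < f a}"
    using fbar_le_iff fbar_inv_in_range fbar_fbar_inv fbar_inv_fbar fbar_in_range
    by (auto simp: image_iff) (metis)
  also have "card \<dots> = k"
  proof -
    have "inj_on (fbar n f) {a \<in> {1..int n}. int n < f a}"
      using fbar_inj by (rule inj_on_subset) auto
    then show ?thesis using card_image card_f_gt_n by metis
  qed
  finally show ?thesis .
qed

lemma J_set_succ:
  assumes r: "r \<in> {1..int n}" "r < int n"
  shows "J_set n f (r + 1) = insert (fbar n f r) (J_set n f r) - {r + 1}"
proof (rule set_eqI)
  fix u
  have r1: "r + 1 \<in> {1..int n}" using r by auto
  show "u \<in> J_set n f (r + 1) \<longleftrightarrow> u \<in> insert (fbar n f r) (J_set n f r) - {r + 1}"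
  proof (cases "u \<in> {1..int n}")
    case True
    then show ?thesis
      unfolding mem_J_set_iff[OF r1] cyclic_Ioo_succ
      using fbar_inv_eq_iff[OF True r(1)] fbar_in_range by (auto simp: mem_J_set_iff[OF r(1)])
  next
    case False
    then show ?thesis using J_set_subset fbar_in_range by blast
  qed
qed

lemma card_J_set_succ:
  assumes r: "r \<in> {1..int n}" "r < int n"
  shows "card (J_set n f (r + 1)) = card (J_set n f r)"
proof -
  have r1: "r + 1 \<in> {1..int n}" using r by auto
  have "fbar n f r \<notin> J_set n f r"
    using mem_J_set_iff[OF r(1)] fbar_inv_fbar[OF r(1)] cyclic_Ioo_start by auto
  moreover have "r + 1 \<in> insert (fbar n f r) (J_set n f r)"
  proof (cases "fbar_inv n f (r + 1) = r")
    case False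
    then show ?thesis using mem_J_set_iff[OF r(1)] cyclic_Ioo_pred r1 by auto
  qed (use fbar_fbar_inv[OF r1] in auto)
  ultimately show ?thesis
    using J_set_succ[OF r] finite_J_set by (simp add: card_insert_if)
qed

lemma card_J_set:
  assumes "r \<in> {1..int n}"
  shows "card (J_set n f r) + 1 = k"
proof -
  have "r \<le> int n \<longrightarrow> card (J_set n f r) + 1 = k" if "1 \<le> r" for r
    using that
  proof (induction r rule: int_ge_induct)
    case base then show ?case using card_J_set_1 by simp
  next
    case (step i) then show ?case using card_J_set_succ[of i] by auto
  qed
  then show ?thesis using assms by auto
qed

definition angles_separate_arrows :: "(int \<Rightarrow> real) \<Rightarrow> bool" where
  "angles_separate_arrows \<theta> \<longleftrightarrow> (\<forall>u\<in>{1..int n}. \<forall>v\<in>{1..int n}. u \<noteq> v \<longrightarrow>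
     arrows_separated (fbar_inv n f u) u (fbar_inv n f v) v \<longrightarrow> sin (\<theta> v - \<theta> u) \<noteq> 0)"

lemma angles_separate_arrows_if_admissible:
  assumes adm: "f_admissible n f \<theta>" and nondeg: "f_nondegenerate n f \<theta>"
  shows "angles_separate_arrows \<theta>"
  unfolding angles_separate_arrows_def
proof (intro ballI impI)
  fix u v assume u: "u \<in> {1..int n}" and v: "v \<in> {1..int n}" and "u \<noteq> v"
    and sep: "arrows_separated (fbar_inv n f u) u (fbar_inv n f v) v"
  have sin_swap: "sin (\<theta> v - \<theta> u) = - sin (\<theta> u - \<theta> v)"
    by (metis minus_diff_eq sin_minus)
  have crossing_pos: "0 < sin (\<theta> q - \<theta> p)" if "f_crossing n f p q" "p < q" for p q
  proof -
    have "\<theta> p < \<theta> q \<and> \<theta> q < \<theta> p + pi" using adm that unfolding f_admissible_def by blast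
    then show ?thesis by (intro sin_gt_zero) auto
  qed
  have misaligned: "sin (\<theta> p - \<theta> q) \<noteq> 0" if "Mis_du n f p q" for p q
    using nondeg that sin_zero_iff_int2 unfolding f_nondegenerate_def by blast
  have "fbar_inv n f u \<noteq> fbar_inv n f v"
    using \<open>u \<noteq> v\<close> fbar_fbar_inv[OF u] fbar_fbar_inv[OF v] by metis
  then consider "f_crossing n f u v" "f_crossing n f v u" | "Mis_du n f u v" | "Mis_du n f v u"
    using sep chords_cross_swap u v \<open>u \<noteq> v\<close> unfolding arrows_separated_def f_crossing_def Mis_du_def
    by blast
  then show "sin (\<theta> v - \<theta> u) \<noteq> 0"
  proof cases
    case 1
    then show ?thesis
      using crossing_pos[of u v] crossing_pos[of v u] sin_swap \<open>u \<noteq> v\<close> by (cases "u < v") auto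
  qed (use misaligned sin_swap in auto)
qed

section \<open>Windows of consecutive sets \<open>J\<^sub>r\<close>\<close>

lemma mem_J_set_modn_iff:
  "u \<in> J_set n f (modn n x) \<longleftrightarrow> u \<in> {1..int n} \<and> cyclic_Ioo (fbar_inv n f u) u (modn n x)"
  using mem_J_set_iff[OF modn_in_range[OF n_pos]] .

lemma leaves_J_set_at:
  assumes "u \<in> J_set n f (modn n x)" "u \<notin> J_set n f (modn n (x + 1))"
  shows "u = modn n (x + 1)"
proof -
  have u: "u \<in> {1..int n}" "cyclic_Ioo (fbar_inv n f u) u (modn n x)"
    using assms(1) mem_J_set_modn_iff by auto
  moreover have "\<not> cyclic_Ioo (fbar_inv n f u) u (if modn n x < int n then modn n x + 1 else 1)"
    using assms(2) u(1) mem_J_set_modn_iff[of u "x + 1"] modn_add_1[OF n_pos, of x] by simp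
  ultimately show ?thesis
    using cyclic_Ioo_exit[OF fbar_inv_in_range _ modn_in_range[OF n_pos]] modn_add_1[OF n_pos, of x]
    by simp
qed

lemma enters_J_set_at:
  assumes "u \<in> {1..int n}" "u \<notin> J_set n f (modn n x)" "u \<in> J_set n f (modn n (x + 1))"
  shows "fbar_inv n f u = modn n x"
proof -
  have "\<not> cyclic_Ioo (fbar_inv n f u) u (modn n x)"
    using assms(1,2) mem_J_set_modn_iff by auto
  moreover have "cyclic_Ioo (fbar_inv n f u) u (if modn n x < int n then modn n x + 1 else 1)"
    using assms(3) mem_J_set_modn_iff[of u "x + 1"] modn_add_1[OF n_pos, of x] by simp
  ultimately show ?thesis
    using cyclic_Ioo_enter[OF fbar_inv_in_range[OF assms(1)] assms(1) modn_in_range[OF n_pos]] by simp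
qed

definition J_window :: "int \<Rightarrow> nat \<Rightarrow> int set" where
  "J_window j m = {p \<in> {1..int n}. \<forall>i<m. p \<in> J_set n f (modn n (j + int i))}"

lemma J_window_1: "J_window j 1 = J_set n f (modn n j)"
  unfolding J_window_def using J_set_subset[of "modn n j"] by auto

lemma J_window_subset: "1 \<le> m \<Longrightarrow> J_window j m \<subseteq> J_set n f (modn n j)"
  unfolding J_window_def by (auto dest: spec[of _ 0])

lemma J_window_range: "J_window j m \<subseteq> {1..int n}"
  unfolding J_window_def by auto

lemma card_J_window: "1 \<le> m \<Longrightarrow> card (J_window j m) + 1 \<le> k"
  using card_mono[OF finite_J_set J_window_subset] card_J_set[OF modn_in_range[OF n_pos]]
  by (metis add_le_mono1)

lemma J_window_Suc:
  assumes "1 \<le> m"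
  shows "J_window j (Suc m) = J_window j m \<inter> J_window (j + 1) m"
proof -
  have shift: "(\<forall>i<Suc m. P (j + int i)) \<longleftrightarrow> (\<forall>i<m. P (j + int i)) \<and> (\<forall>i<m. P (j + 1 + int i))"
    for P
  proof safe
    fix i assume "\<forall>i<Suc m. P (j + int i)" "i < m"
    then show "P (j + int i)" "P (j + 1 + int i)"
      using spec[of _ "Suc i"] by (auto simp: add.assoc)
  next
    fix i assume P: "\<forall>i<m. P (j + int i)" "\<forall>i<m. P (j + 1 + int i)" and "i < Suc m"
    show "P (j + int i)"
    proof (cases "i < m")
      case False
      then have "i = Suc (m - 1)" "m - 1 < m" using \<open>i < Suc m\<close> assms by auto
      then show ?thesis using P(2) by (metis add.assoc add.commute of_nat_Suc)
    qed (use P(1) in blast)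
  qed
  show ?thesis
  proof (rule set_eqI)
    fix p
    show "p \<in> J_window j (Suc m) \<longleftrightarrow> p \<in> J_window j m \<inter> J_window (j + 1) m"
      unfolding J_window_def using shift[of "\<lambda>x. p \<in> J_set n f (modn n x)"] by auto
  qed
qed

lemma J_window_empty: "J_window 1 n = {}"
proof -
  have "p \<notin> J_window 1 n" if p: "p \<in> {1..int n}" for p
  proof
    assume "p \<in> J_window 1 n"
    moreover have "nat (p - 1) < n" using p by auto
    ultimately have "p \<in> J_set n f (modn n (1 + int (nat (p - 1))))" unfolding J_window_def by blast
    then have "p \<in> J_set n f (modn n p)" using p by simp
    then show False unfolding J_set_def modn_eq_self[OF p] by simp
  qed
  then show ?thesis unfolding J_window_def by blast
qed

lemma J_window_leaving:
  assumes "u \<in> J_window j m" "u \<notin> J_window (j + 1) m"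
  shows "u = modn n (j + int m)"
proof -
  have u: "u \<in> {1..int n}" "\<forall>i<m. u \<in> J_set n f (modn n (j + int i))"
    using assms(1) unfolding J_window_def by auto
  then obtain i where i: "i < m" "u \<notin> J_set n f (modn n (j + int i + 1))"
    using assms(2) unfolding J_window_def by (auto simp: ac_simps)
  have "Suc i = m"
  proof (rule ccontr)
    assume "Suc i \<noteq> m"
    then have "Suc i < m" using i(1) by simp
    then have "u \<in> J_set n f (modn n (j + int (Suc i)))" using u(2) by blast
    then show False using i(2) by (simp add: ac_simps)
  qed
  then show ?thesis
    using leaves_J_set_at[of u "j + int i"] u(2) i by (auto simp: ac_simps)
qed

lemma J_window_entering:
  assumes "v \<in> J_window (j + 1) m" "v \<notin> J_window j m"
  shows "fbar_inv n f v = modn n j"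
proof -
  have v: "v \<in> {1..int n}" "\<forall>i<m. v \<in> J_set n f (modn n (j + 1 + int i))"
    using assms(1) unfolding J_window_def by auto
  then obtain i where i: "i < m" "v \<notin> J_set n f (modn n (j + int i))"
    using assms(2) unfolding J_window_def by auto
  have "i = 0"
  proof (rule ccontr)
    assume "i \<noteq> 0"
    have "i - 1 < m" using i(1) by simp
    then have "v \<in> J_set n f (modn n (j + 1 + int (i - 1)))" using v(2) by blast
    then show False using i(2) \<open>i \<noteq> 0\<close> by (simp add: of_nat_diff ac_simps)
  qed
  moreover have "v \<in> J_set n f (modn n (j + 1))" using v(2) i(1) \<open>i = 0\<close> by force
  ultimately show ?thesis using enters_J_set_at[of v j] v i by simp
qed

lemma J_window_exchange_separated:
  assumes "1 \<le> m" and u: "u \<in> J_window j m" "u \<notin> J_window (j + 1) m"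
    and v: "v \<in> J_window (j + 1) m" "v \<notin> J_window j m"
  shows "arrows_separated (fbar_inv n f u) u (fbar_inv n f v) v"
proof -
  define r where "r = modn n j"
  have r: "r \<in> {1..int n}" unfolding r_def using modn_in_range[OF n_pos] .
  have un: "u \<in> {1..int n}" and vn: "v \<in> {1..int n}" and "u \<noteq> v"
    using u v unfolding J_window_def by auto
  have a_v: "fbar_inv n f v = r" using J_window_entering[OF v] unfolding r_def .
  then have "fbar_inv n f u \<noteq> r" using fbar_fbar_inv[OF un] fbar_fbar_inv[OF vn] \<open>u \<noteq> v\<close> by metis
  moreover have "cyclic_Ioo (fbar_inv n f u) u r"
    using J_window_subset[OF assms(1)] u(1) mem_J_set_iff[OF r] unfolding r_def by blast
  moreover have "cyclic_Ioo r v (if r < int n then r + 1 else 1)"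
  proof -
    have "v \<in> J_set n f (modn n (j + 1))" using v(1) assms(1) unfolding J_window_def by force
    then have "cyclic_Ioo (fbar_inv n f v) v (modn n (j + 1))" using mem_J_set_modn_iff by blast
    then show ?thesis using modn_add_1[OF n_pos, of j] a_v unfolding r_def by simp
  qed
  moreover have "cyclic_Ioo r v u"
  proof -
    have "m - 1 < m" using assms(1) by simp
    then have "v \<in> J_set n f (modn n (j + 1 + int (m - 1)))" using v(1) unfolding J_window_def by blast
    then have "v \<in> J_set n f u"
      using J_window_leaving[OF u] assms(1) by (simp add: of_nat_diff ac_simps)
    then show ?thesis using mem_J_set_iff[OF un] a_v by simp
  qed
  ultimately show ?thesis
    using arrows_separated_if_arcs[OF fbar_inv_in_range[OF un] un r vn \<open>u \<noteq> v\<close>] a_v by simp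
qed

lemma J_window_leaving_unique:
  assumes "u \<in> J_window j m" "u \<notin> J_window (j + 1) m"
  shows "J_window j m = insert u (J_window j m \<inter> J_window (j + 1) m)"
proof -
  have "x = u" if "x \<in> J_window j m" "x \<notin> J_window (j + 1) m" for x
    using J_window_leaving[OF that] J_window_leaving[OF assms] by simp
  then show ?thesis using assms(1) by blast
qed

lemma J_window_entering_unique:
  assumes "v \<in> J_window (j + 1) m" "v \<notin> J_window j m"
  shows "J_window (j + 1) m = insert v (J_window j m \<inter> J_window (j + 1) m)"
proof -
  have "x = v" if "x \<in> J_window (j + 1) m" "x \<notin> J_window j m" for x
  proof -
    have "fbar_inv n f x = fbar_inv n f v"
      using J_window_entering[OF that] J_window_entering[OF assms] by simp
    then show ?thesis
      using fbar_fbar_inv J_window_range that(1) assms(1) by (metis subsetD)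
  qed
  then show ?thesis using assms(1) by blast
qed

lemma annihilates_multiples_J_window:
  assumes J_annihilated: "\<And>r. r \<in> {1..int n} \<Longrightarrow> (\<Sum>i\<in>{1..k}. c i * sin_prod_set \<theta> (J_set n f r) (s i)) = 0"
    and separated: "angles_separate_arrows \<theta>"
    and "1 \<le> m"
  shows "annihilates_multiples k \<theta> s c (J_window j m)"
  using \<open>1 \<le> m\<close>
proof (induction m arbitrary: j rule: nat_induct_at_least)
  case base
  have "card (J_set n f (modn n j)) + 1 = k" using card_J_set[OF modn_in_range[OF n_pos]] .
  then show ?case
    unfolding J_window_1 annihilates_multiples_def
    using J_annihilated[OF modn_in_range[OF n_pos]] by (auto simp: sin_prod_def)
next
  case (Suc m)
  define A B where "A = J_window j m" and "B = J_window (j + 1) m"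
  have split: "J_window j (Suc m) = A \<inter> B" unfolding A_def B_def using J_window_Suc[OF Suc.hyps] .
  have IH: "annihilates_multiples k \<theta> s c A" "annihilates_multiples k \<theta> s c B"
    unfolding A_def B_def by (rule Suc.IH)+
  consider "A \<subseteq> B" | "B \<subseteq> A" | u v where "u \<in> A" "u \<notin> B" "v \<in> B" "v \<notin> A" by blast
  then show ?case
  proof cases
    case 1
    then show ?thesis using IH(1) unfolding split by (simp add: Int_absorb2)
  next
    case 2
    then show ?thesis using IH(2) unfolding split by (simp add: Int_absorb1)
  next
    case 3
    have A: "A = insert u (A \<inter> B)" using J_window_leaving_unique 3 unfolding A_def B_def by blast
    have B: "B = insert v (A \<inter> B)" using J_window_entering_unique 3 unfolding A_def B_def by blast
    have fin: "finite (A \<inter> B)"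
      unfolding A_def using finite_subset[OF J_window_range finite_atLeastAtMost_int] by blast
    have "card A = card (A \<inter> B) + 1" using fin 3 by (subst A) simp
    then have "card (A \<inter> B) + 2 \<le> k" using card_J_window[OF Suc.hyps, of j] unfolding A_def by simp
    moreover have "sin (\<theta> v - \<theta> u) \<noteq> 0"
    proof -
      have "u \<in> {1..int n}" "v \<in> {1..int n}" "u \<noteq> v"
        using 3 J_window_range unfolding A_def B_def by blast+
      moreover have "arrows_separated (fbar_inv n f u) u (fbar_inv n f v) v"
        using J_window_exchange_separated[OF Suc.hyps] 3 unfolding A_def B_def by simp
      ultimately show ?thesis using separated unfolding angles_separate_arrows_def by blast
    qed
    ultimately show ?thesis
      using annihilates_multiples_of_pair[OF fin, of u v] IH A B 3 unfolding split by simp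
  qed
qed

lemma annihilates_multiples_empty:
  assumes "\<And>r. r \<in> {1..int n} \<Longrightarrow> (\<Sum>i\<in>{1..k}. c i * sin_prod_set \<theta> (J_set n f r) (s i)) = 0"
    and "angles_separate_arrows \<theta>"
  shows "annihilates_multiples k \<theta> s c {}"
  using annihilates_multiples_J_window[OF assms n_ge_1, where j = 1] J_window_empty by simp

lemma gamma_apply:
  "gamma n f \<theta> t r = (if r \<in> {1..int n} then eps_sign n f r * sin_prod_set \<theta> (J_set n f r) t else 0)"
  unfolding gamma_def sin_prod_set_def ..

lemma gamma_in_span_samples:
  assumes "distinct_sin_nodes s k"
  shows "gamma n f \<theta> t \<in> V.span ((\<lambda>i. gamma n f \<theta> (s i)) ` {1..k})"
proof -
  define L where "L j = sin_lagrange s k j t / sin_lagrange s k j (s j)" for j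
  have "gamma n f \<theta> t = (\<Sum>j\<in>{1..k}. vscale (L j) (gamma n f \<theta> (s j)))"
  proof
    fix r
    show "gamma n f \<theta> t r = (\<Sum>j\<in>{1..k}. vscale (L j) (gamma n f \<theta> (s j))) r"
    proof (cases "r \<in> {1..int n}")
      case True
      then show ?thesis
        unfolding sum_vscale_apply gamma_apply L_def
        using sin_prod_set_lagrange_expansion[OF assms finite_J_set card_J_set[OF True], of \<theta> t]
        by (simp add: sum_distrib_left algebra_simps)
    next
      case False
      then show ?thesis unfolding sum_vscale_apply gamma_apply by (simp del: atLeastAtMost_iff)
    qed
  qed
  also have "\<dots> \<in> V.span ((\<lambda>i. gamma n f \<theta> (s i)) ` {1..k})"
    by (intro V.span_sum V.span_scale V.span_base) auto
  finally show ?thesis .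
qed

lemma gamma_samples_coeffs_zero:
  assumes nodes: "distinct_sin_nodes s k"
    and separated: "angles_separate_arrows \<theta>"
    and combination: "(\<Sum>i\<in>{1..k}. vscale (c i) (gamma n f \<theta> (s i))) = 0"
  shows "\<forall>j\<in>{1..k}. c j = 0"
proof -
  have "(\<Sum>i\<in>{1..k}. c i * sin_prod_set \<theta> (J_set n f r) (s i)) = 0" if "r \<in> {1..int n}" for r
  proof -
    have "eps_sign n f r * (\<Sum>i\<in>{1..k}. c i * sin_prod_set \<theta> (J_set n f r) (s i)) = 0"
      using fun_cong[OF combination, of r] that
      unfolding sum_vscale_apply gamma_apply by (simp add: sum_distrib_left algebra_simps)
    then show ?thesis unfolding eps_sign_def by simp
  qed
  then have "annihilates_multiples k \<theta> s c {}"
    using annihilates_multiples_empty separated by blast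
  then show ?thesis using coeffs_zero_if_annihilates_multiples_empty[OF nodes] by blast
qed

end

theorem mainTheorem18:
  fixes k n :: nat and f :: "int \<Rightarrow> int" and R :: "int set"
    and \<theta> :: "int \<Rightarrow> real" and s :: "nat \<Rightarrow> real"
  assumes "n \<ge> 1"
    and "bounded_affine_perm k n f"
    and "loopless f"
    and "component_reps n f R"
    and "\<theta> \<in> Theta_pos n f R"
    and "f_nondegenerate n f \<theta>"
    and "0 \<le> s 1" and "\<forall>i\<in>{1..<k}. s i < s (Suc i)" and "s k < pi"
  shows "inj_on (\<lambda>i. gamma n f \<theta> (s i)) {1..k}
       \<and> \<not> module.dependent vscale ((\<lambda>i. gamma n f \<theta> (s i)) ` {1..k})
       \<and> module.span vscale ((\<lambda>i. gamma n f \<theta> (s i)) ` {1..k})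
           = module.span vscale (range (gamma n f \<theta>))
       \<and> vector_space.dim vscale (module.span vscale (range (gamma n f \<theta>))) = k"
proof -
  interpret loopless_affine_perm k n f using assms(1-3) by unfold_locales
  let ?G = "\<lambda>i. gamma n f \<theta> (s i)"
  have nodes: "distinct_sin_nodes s k" using distinct_sin_nodes_if_increasing assms(7-9) .
  have "f_admissible n f \<theta>" using assms(5) unfolding Theta_pos_def by simp
  note separated = angles_separate_arrows_if_admissible[OF this assms(6)]
  have indep: "inj_on ?G {1..k} \<and> V.independent (?G ` {1..k})"
    using gamma_samples_coeffs_zero[OF nodes separated] by (intro V.inj_on_independent_image) auto
  have span: "V.span (?G ` {1..k}) = V.span (range (gamma n f \<theta>))"
    unfolding V.span_eq using gamma_in_span_samples[OF nodes] V.span_base by auto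
  have "V.dim (V.span (range (gamma n f \<theta>))) = k"
    unfolding span[symmetric] using V.dim_span_eq_card_independent indep card_image by fastforce
  then show ?thesis using indep span by blast
qed

end
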